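(* Let $\mathcal L$ be a linearly ordered non-discrete MV-algebra. Let $\mathcal F_1\subseteq\mathcal F_2\subseteq\mathcal G$ be filters (in the sense below) with $|\mathcal F_2\setminus\mathcal F_1|\ge 2$. Then $$\mathcal F_1\sqsubseteq\!\!\to\mathcal G\neq\mathcal F_2\sqsubseteq\!\!\to\mathcal G.$$
   Context: $\mathcal L=(L,\oplus,\lnot,0)$ is a linearly ordered MV-algebra. We write $1=\lnot0$, $x\otimes y=\lnot(\lnot x\oplus\lnot y)$, and $x\to y=\lnot x\oplus y$. Non-discrete means no element has an immediate successor or an immediate predecessor. In this setting a "filter" means a nonempty proper upward-closed subset $\mathcal F$ of $L$ whose kernel $\mathcal K(\mathcal F)=\{z:\forall a\notin\mathcal F,\ z\to a\notin\mathcal F\}$ equals $\{1\}$. For a filter $\mathcal F$ and $a\in L$, let $\mathcal F_a=\{z: z\to a\notin\mathcal F\}$. For $\mathcal F\subseteq\mathcal G$ we put $\mathcal F\sqsubseteq\!\!\to\mathcal G=\bigcap_{a\in L\setminus\mathcal G}\mathcal F_a$. *)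

theory Defs
  imports Main
begin

definition mv_algebra :: "'a set \<Rightarrow> ('a \<Rightarrow> 'a \<Rightarrow> 'a) \<Rightarrow> ('a \<Rightarrow> 'a) \<Rightarrow> 'a \<Rightarrow> bool" where
  "mv_algebra L oplus neg zero \<longleftrightarrow>
     zero \<in> L \<and>
     (\<forall>x\<in>L. \<forall>y\<in>L. oplus x y \<in> L) \<and>
     (\<forall>x\<in>L. neg x \<in> L) \<and>
     (\<forall>x\<in>L. \<forall>y\<in>L. \<forall>z\<in>L. oplus x (oplus y z) = oplus (oplus x y) z) \<and>
     (\<forall>x\<in>L. \<forall>y\<in>L. oplus x y = oplus y x) \<and>
     (\<forall>x\<in>L. oplus x zero = x) \<and>
     (\<forall>x\<in>L. neg (neg x) = x) \<and>
     (\<forall>x\<in>L. oplus x (neg zero) = neg zero) \<and>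
     (\<forall>x\<in>L. \<forall>y\<in>L. oplus (neg (oplus (neg x) y)) y = oplus (neg (oplus (neg y) x)) x)"

definition mv_one :: "('a \<Rightarrow> 'a) \<Rightarrow> 'a \<Rightarrow> 'a" where
  "mv_one neg zero = neg zero"

definition mv_imp :: "('a \<Rightarrow> 'a \<Rightarrow> 'a) \<Rightarrow> ('a \<Rightarrow> 'a) \<Rightarrow> 'a \<Rightarrow> 'a \<Rightarrow> 'a" where
  "mv_imp oplus neg x y = oplus (neg x) y"

definition mv_le :: "('a \<Rightarrow> 'a \<Rightarrow> 'a) \<Rightarrow> ('a \<Rightarrow> 'a) \<Rightarrow> 'a \<Rightarrow> 'a \<Rightarrow> 'a \<Rightarrow> bool" where
  "mv_le oplus neg zero x y \<longleftrightarrow> mv_imp oplus neg x y = mv_one neg zero"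

definition mv_less :: "('a \<Rightarrow> 'a \<Rightarrow> 'a) \<Rightarrow> ('a \<Rightarrow> 'a) \<Rightarrow> 'a \<Rightarrow> 'a \<Rightarrow> 'a \<Rightarrow> bool" where
  "mv_less oplus neg zero x y \<longleftrightarrow> mv_le oplus neg zero x y \<and> x \<noteq> y"

definition linear_mv_algebra :: "'a set \<Rightarrow> ('a \<Rightarrow> 'a \<Rightarrow> 'a) \<Rightarrow> ('a \<Rightarrow> 'a) \<Rightarrow> 'a \<Rightarrow> bool" where
  "linear_mv_algebra L oplus neg zero \<longleftrightarrow>
     mv_algebra L oplus neg zero \<and>
     (\<forall>x\<in>L. \<forall>y\<in>L. mv_le oplus neg zero x y \<or> mv_le oplus neg zero y x)"

definition non_discrete :: "'a set \<Rightarrow> ('a \<Rightarrow> 'a \<Rightarrow> 'a) \<Rightarrow> ('a \<Rightarrow> 'a) \<Rightarrow> 'a \<Rightarrow> bool" where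
  "non_discrete L oplus neg zero \<longleftrightarrow>
     (\<forall>a\<in>L. \<not> (\<exists>b\<in>L. mv_less oplus neg zero a b \<and>
                  \<not> (\<exists>c\<in>L. mv_less oplus neg zero a c \<and> mv_less oplus neg zero c b))) \<and>
     (\<forall>a\<in>L. \<not> (\<exists>b\<in>L. mv_less oplus neg zero b a \<and>
                  \<not> (\<exists>c\<in>L. mv_less oplus neg zero b c \<and> mv_less oplus neg zero c a)))"

definition mv_kernel :: "'a set \<Rightarrow> ('a \<Rightarrow> 'a \<Rightarrow> 'a) \<Rightarrow> ('a \<Rightarrow> 'a) \<Rightarrow> 'a set \<Rightarrow> 'a set" where
  "mv_kernel L oplus neg F = {z \<in> L. \<forall>a\<in>L - F. mv_imp oplus neg z a \<notin> F}"

definition mv_filter :: "'a set \<Rightarrow> ('a \<Rightarrow> 'a \<Rightarrow> 'a) \<Rightarrow> ('a \<Rightarrow> 'a) \<Rightarrow> 'a \<Rightarrow> 'a set \<Rightarrow> bool" where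
  "mv_filter L oplus neg zero F \<longleftrightarrow>
     F \<subseteq> L \<and> F \<noteq> {} \<and> F \<noteq> L \<and>
     (\<forall>x\<in>F. \<forall>y\<in>L. mv_le oplus neg zero x y \<longrightarrow> y \<in> F) \<and>
     mv_kernel L oplus neg F = {mv_one neg zero}"

definition filter_sub :: "'a set \<Rightarrow> ('a \<Rightarrow> 'a \<Rightarrow> 'a) \<Rightarrow> ('a \<Rightarrow> 'a) \<Rightarrow> 'a set \<Rightarrow> 'a \<Rightarrow> 'a set" where
  "filter_sub L oplus neg F a = {z \<in> L. mv_imp oplus neg z a \<notin> F}"

text \<open>F \<sqsubseteq>\<rightarrow> G = \<Inter>_{a \<in> L \ G} F_a (within L).\<close>
definition filter_arrow :: "'a set \<Rightarrow> ('a \<Rightarrow> 'a \<Rightarrow> 'a) \<Rightarrow> ('a \<Rightarrow> 'a) \<Rightarrow> 'a set \<Rightarrow> 'a set \<Rightarrow> 'a set" where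
  "filter_arrow L oplus neg F G = {z \<in> L. \<forall>a\<in>L - G. z \<in> filter_sub L oplus neg F a}"

end

theory Submission
  imports Defs
begin

(* Pick x, y in F2 - F1; by linearity we may assume x < y.  Put
   e = y \<odot> \<not>x = \<not>(\<not>y \<oplus> x), so that x \<oplus> e = y and e \<noteq> 0.  Since the kernel
   of G is {1}, the element \<not>e \<noteq> 1 is not in it: there is d \<notin> G with
   e \<oplus> d \<in> G.  Now z = x \<rightarrow> d separates the two intersections:
   - d < x (linearity, x \<in> G, d \<notin> G), hence z \<rightarrow> d = x \<or> d = x \<in> F2, so z \<notin> F2_d;
   - every a \<notin> G lies below d \<oplus> e \<in> G, hence z \<rightarrow> a \<le> \<not>z \<oplus> d \<oplus> e = x \<oplus> e = y,
     and since y \<notin> F1 and F1 is upward closed, z \<rightarrow> a \<notin> F1, i.e. z \<in> F1_a. *)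

locale mv =
  fixes L :: "'a set" and oplus :: "'a \<Rightarrow> 'a \<Rightarrow> 'a" (infixl "\<oplus>" 65)
    and neg :: "'a \<Rightarrow> 'a" and zero :: 'a
  assumes mv_algebra: "mv_algebra L oplus neg zero"
begin

abbreviation le :: "'a \<Rightarrow> 'a \<Rightarrow> bool" (infix "\<preceq>" 50) where
  "x \<preceq> y \<equiv> mv_le oplus neg zero x y"

lemma zero_closed: "zero \<in> L"
  and oplus_closed: "x \<in> L \<Longrightarrow> y \<in> L \<Longrightarrow> x \<oplus> y \<in> L"
  and neg_closed: "x \<in> L \<Longrightarrow> neg x \<in> L"
  and assoc: "x \<in> L \<Longrightarrow> y \<in> L \<Longrightarrow> z \<in> L \<Longrightarrow> x \<oplus> (y \<oplus> z) = x \<oplus> y \<oplus> z"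
  and comm: "x \<in> L \<Longrightarrow> y \<in> L \<Longrightarrow> x \<oplus> y = y \<oplus> x"
  and zero_right: "x \<in> L \<Longrightarrow> x \<oplus> zero = x"
  and neg_neg: "x \<in> L \<Longrightarrow> neg (neg x) = x"
  and one_right: "x \<in> L \<Longrightarrow> x \<oplus> neg zero = neg zero"
  and lukasiewicz: "x \<in> L \<Longrightarrow> y \<in> L \<Longrightarrow>
                      neg (neg x \<oplus> y) \<oplus> y = neg (neg y \<oplus> x) \<oplus> x"
  using mv_algebra unfolding mv_algebra_def by blast+

lemma zero_left: "x \<in> L \<Longrightarrow> zero \<oplus> x = x"
  using comm[OF zero_closed] zero_right by simp

lemma one_left: "x \<in> L \<Longrightarrow> neg zero \<oplus> x = neg zero"
  using comm[OF neg_closed[OF zero_closed]] one_right by simp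

lemma le_iff: "x \<preceq> y \<longleftrightarrow> neg x \<oplus> y = neg zero"
  unfolding mv_le_def mv_imp_def mv_one_def ..

text \<open>\<not>y \<oplus> y = 1, i.e. the order is reflexive; obtained from the
  Lukasiewicz axiom with x = 1.\<close>

lemma neg_oplus_self: assumes "y \<in> L" shows "neg y \<oplus> y = neg zero"
proof -
  have "neg (neg (neg zero) \<oplus> y) \<oplus> y = neg (neg y \<oplus> neg zero) \<oplus> neg zero"
    using lukasiewicz[OF neg_closed[OF zero_closed] assms] .
  then show ?thesis
    using assms neg_neg[OF zero_closed] one_right[OF neg_closed[OF assms]]
      one_right[OF zero_closed] zero_left by simp
qed

text \<open>This is the key identity:
  it rewrites x \<oplus> (y \<ominus> x) as y and (x \<rightarrow> d) \<rightarrow> d as x for d \<le> x.\<close>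

lemma join_right:
  assumes "x \<in> L" "y \<in> L" "x \<preceq> y"
  shows "neg (neg y \<oplus> x) \<oplus> x = y"
  using lukasiewicz[OF assms(1,2)] assms neg_neg[OF zero_closed] zero_left
  by (simp add: le_iff)

lemma le_antisym:
  assumes "x \<in> L" "y \<in> L" "x \<preceq> y" "y \<preceq> x"
  shows "x = y"
  using join_right[OF assms(1,2,3)] join_right[OF assms(2,1,4)] assms(3,4)
    neg_neg[OF zero_closed] zero_left assms(1,2)
  by (simp add: le_iff)

lemma oplus_mono:
  assumes abc: "a \<in> L" "b \<in> L" "c \<in> L" and "a \<preceq> b"
  shows "c \<oplus> a \<preceq> c \<oplus> b"
proof -
  define t where "t = neg (neg b \<oplus> a)"
  have t: "t \<in> L" using abc unfolding t_def by (simp add: oplus_closed neg_closed)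
  have "b = t \<oplus> a" using join_right[OF abc(1,2) \<open>a \<preceq> b\<close>] unfolding t_def by simp
  then have cb: "c \<oplus> b = (c \<oplus> a) \<oplus> t"
    using assoc[OF abc(3,1) t] comm[OF t abc(1)] by simp
  have ca: "c \<oplus> a \<in> L" using abc by (simp add: oplus_closed)
  have "neg (c \<oplus> a) \<oplus> (c \<oplus> b) = (neg (c \<oplus> a) \<oplus> (c \<oplus> a)) \<oplus> t"
    using assoc[OF neg_closed[OF ca] ca t] cb by simp
  also have "\<dots> = neg zero" using neg_oplus_self[OF ca] one_left[OF t] by simp
  finally show ?thesis by (simp add: le_iff)
qed

lemma kernel_witness:
  assumes "mv_filter L oplus neg zero G" "w \<in> L" "w \<noteq> neg zero"
  obtains d where "d \<in> L - G" "neg w \<oplus> d \<in> G"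
proof -
  have "w \<notin> mv_kernel L oplus neg G"
    using assms unfolding mv_filter_def mv_one_def by auto
  then show ?thesis
    using that assms(2) unfolding mv_kernel_def mv_imp_def by auto
qed

end

locale linear_mv = mv +
  assumes total: "x \<in> L \<Longrightarrow> y \<in> L \<Longrightarrow> x \<preceq> y \<or> y \<preceq> x"
begin

lemma below_filter:
  assumes "mv_filter L oplus neg zero F" "u \<in> F" "v \<in> L - F"
  shows "v \<preceq> u"
  using assms total[of u v] unfolding mv_filter_def by blast

lemma separating_element:
  assumes G: "mv_filter L oplus neg zero G"
    and x: "x \<in> G" and y: "y \<in> L" and "x \<preceq> y" "x \<noteq> y"
  obtains z d where "z \<in> L" "d \<in> L - G" "neg z \<oplus> d = x"
    "\<And>a. a \<in> L - G \<Longrightarrow> neg z \<oplus> a \<preceq> y"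
proof -
  have xL: "x \<in> L" using G x unfolding mv_filter_def by auto
  define e where "e = neg (neg y \<oplus> x)"
  have eL: "e \<in> L" using xL y unfolding e_def by (simp add: oplus_closed neg_closed)
  have x_e: "x \<oplus> e = y"
    using join_right[OF xL y \<open>x \<preceq> y\<close>] comm[OF xL eL] unfolding e_def by simp
  have "neg e \<noteq> neg zero"
  proof
    assume "neg e = neg zero"
    then have "y \<preceq> x" using neg_neg[OF oplus_closed[OF neg_closed[OF y] xL]]
      unfolding e_def le_iff by simp
    then show False using le_antisym[OF xL y \<open>x \<preceq> y\<close>] \<open>x \<noteq> y\<close> by simp
  qed
  then obtain d where d: "d \<in> L - G" and ed: "e \<oplus> d \<in> G"
    using kernel_witness[OF G neg_closed[OF eL]] neg_neg[OF eL] by metis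
  have dL: "d \<in> L" using d by simp
  define z where "z = neg x \<oplus> d"
  have zL: "z \<in> L" using xL dL unfolding z_def by (simp add: oplus_closed neg_closed)
  have z_d: "neg z \<oplus> d = x"
    using join_right[OF dL xL below_filter[OF G x d]] unfolding z_def .
  have "neg z \<oplus> a \<preceq> y" if a: "a \<in> L - G" for a
  proof -
    have deL: "d \<oplus> e \<in> L" using dL eL by (simp add: oplus_closed)
    have "a \<preceq> d \<oplus> e"
      using below_filter[OF G _ a] ed comm[OF dL eL] by simp
    then have "neg z \<oplus> a \<preceq> neg z \<oplus> (d \<oplus> e)"
      using oplus_mono a deL neg_closed[OF zL] by simp
    also have "neg z \<oplus> (d \<oplus> e) = y"
      using assoc[OF neg_closed[OF zL] dL eL] z_d x_e by simp
    finally show ?thesis .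
  qed
  then show ?thesis using that zL d z_d by blast
qed

lemma filter_arrow_differ:
  assumes F1: "mv_filter L oplus neg zero F1" and G: "mv_filter L oplus neg zero G"
    and "F2 \<subseteq> G" and x: "x \<in> F2 - F1" and y: "y \<in> F2 - F1"
    and "x \<preceq> y" "x \<noteq> y"
  shows "filter_arrow L oplus neg F1 G \<noteq> filter_arrow L oplus neg F2 G"
proof -
  have xG: "x \<in> G" and yL: "y \<in> L"
    using assms(3) x y G unfolding mv_filter_def by auto
  obtain z d where zL: "z \<in> L" and d: "d \<in> L - G" and z_d: "neg z \<oplus> d = x"
    and below_y: "\<And>a. a \<in> L - G \<Longrightarrow> neg z \<oplus> a \<preceq> y"
    using separating_element[OF G xG yL \<open>x \<preceq> y\<close> \<open>x \<noteq> y\<close>] by blast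
  have "z \<notin> filter_arrow L oplus neg F2 G"
    using d z_d x unfolding filter_arrow_def filter_sub_def mv_imp_def by auto
  moreover have "neg z \<oplus> a \<notin> F1" if "a \<in> L - G" for a
    using below_y[OF that] y yL F1 unfolding mv_filter_def by blast
  then have "z \<in> filter_arrow L oplus neg F1 G"
    using zL unfolding filter_arrow_def filter_sub_def mv_imp_def by blast
  ultimately show ?thesis by blast
qed

end

theorem mainTheorem13:
  fixes L :: "'a set" and oplus :: "'a \<Rightarrow> 'a \<Rightarrow> 'a" and neg :: "'a \<Rightarrow> 'a" and zero :: 'a
    and F1 F2 G :: "'a set"
  assumes "linear_mv_algebra L oplus neg zero"
    and "non_discrete L oplus neg zero"
    and "mv_filter L oplus neg zero F1"
    and "mv_filter L oplus neg zero F2"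
    and "mv_filter L oplus neg zero G"
    and "F1 \<subseteq> F2" and "F2 \<subseteq> G"
    and "\<exists>x y. x \<in> F2 - F1 \<and> y \<in> F2 - F1 \<and> x \<noteq> y"
  shows "filter_arrow L oplus neg F1 G \<noteq> filter_arrow L oplus neg F2 G"
proof -
  interpret linear_mv L oplus neg zero
    using assms(1) unfolding linear_mv_algebra_def
    by unfold_locales auto
  obtain x y where x: "x \<in> F2 - F1" and y: "y \<in> F2 - F1" and "x \<noteq> y"
    using assms(8) by blast
  have "x \<in> L" "y \<in> L" using x y assms(5,7) unfolding mv_filter_def by auto
  then consider "x \<preceq> y" | "y \<preceq> x" using total by blast
  then show ?thesis
  proof cases
    case 1
    show ?thesis using filter_arrow_differ[OF assms(3,5,7) x y 1 \<open>x \<noteq> y\<close>] .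
  next
    case 2
    show ?thesis using filter_arrow_differ[OF assms(3,5,7) y x 2] \<open>x \<noteq> y\<close> by simp
  qed
qed

end
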